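(* Let $r_{\mathrm c}>0$, let $w_{\mathrm c}(\lambda)=\sqrt{\lambda(\lambda-4r_{\mathrm c})}$ be the branch analytic in $|\lambda|>4r_{\mathrm c}$ with $w_{\mathrm c}(\lambda)\sim\lambda$ as $\lambda\to\infty$, and let $I\subset\mathbb{R}$ be an open interval. Let $$\mathfrak a(\bar\epsilon,x)=r_{\mathrm c}+\sum_{k\ge 1}\mathfrak a_k(x)\bar\epsilon^{k},\qquad \mathbb V(\lambda,\bar\epsilon;x)=\sum_{k\ge 0}\mathbb V^{[k]}(\lambda,x)\bar\epsilon^{k}$$ be formal power series in $\bar\epsilon$ with $\mathfrak a_k\in C^\infty(I)$, each $\mathbb V^{[k]}$ analytic in $\lambda$ for $|\lambda|>4r_{\mathrm c}$ and $C^\infty$ in $x$, and $\mathbb V^{[0]}=\lambda/w_{\mathrm c}$. Assume that, as formal power series in $\bar\epsilon$, $$\mathfrak a(\bar\epsilon,x)\big(\mathbb V(\lambda,\bar\epsilon;x)+\mathbb V(\lambda,-\bar\epsilon;x-\bar\epsilon)\big)\big(\mathbb V(\lambda,\bar\epsilon;x)+\mathbb V(\lambda,-\bar\epsilon;x+\bar\epsilon)\big)=\lambda\big(\mathbb V(\lambda,\bar\epsilon;x)^2-1\big).$$ Then the two formal series $$E_\mp(\bar\epsilon)=\lambda\,\mathbb V(\lambda,\bar\epsilon;x\mp\tfrac{\bar\epsilon}{2})-\mathfrak a(\bar\epsilon,x\mp\tfrac{\bar\epsilon}{2})\Big[\mathbb V(\lambda,\bar\epsilon;x\mp\tfrac{\bar\epsilon}{2})+\mathbb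 V(\lambda,-\bar\epsilon;x\mp\tfrac{3\bar\epsilon}{2})\Big]$$ (one with all upper signs, one with all lower signs) are even functions of $\bar\epsilon$, i.e. all coefficients of odd powers of $\bar\epsilon$ vanish.
   Context: Shifted and sign-reversed series are understood formally: for $F(\bar\epsilon;x)=\sum_kF_k(x)\bar\epsilon^k$ and constants $c$, $F(\pm\bar\epsilon;x+c\bar\epsilon)=\sum_{k,n}(\pm1)^kF_k^{(n)}(x)c^n\bar\epsilon^{k+n}/n!$; equalities of formal series mean equality of coefficients of each power of $\bar\epsilon$ (coefficients being functions of $\lambda$ and $x$). *)

theory Defs
  imports "HOL-Complex_Analysis.Complex_Analysis"
begin

definition xderiv :: "(real \<Rightarrow> 'a::real_normed_vector) \<Rightarrow> real \<Rightarrow> 'a" where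
  "xderiv f x = vector_derivative f (at x)"

definition smooth_on :: "real set \<Rightarrow> (real \<Rightarrow> 'a::real_normed_vector) \<Rightarrow> bool" where
  "smooth_on I f \<longleftrightarrow> (\<forall>n. \<forall>x\<in>I. ((xderiv ^^ n) f) differentiable (at x))"

text \<open>The branch of sqrt(lambda (lambda - 4 r)) analytic in |lambda| > 4r with w ~ lambda at infinity.\<close>
definition w_c :: "real \<Rightarrow> complex \<Rightarrow> complex" where
  "w_c r l = l * csqrt (1 - 4 * of_real r / l)"

text \<open>Formal power series in eps whose coefficients are functions of x:
  F :: nat => real => complex, F k x = coefficient of eps^k.\<close>

text \<open>F(s*eps; x + c*eps), coefficient m:
  sum over k+n=m of s^k F_k^(n)(x) c^n / n!.\<close>
definition fshift :: "real \<Rightarrow> real \<Rightarrow> (nat \<Rightarrow> real \<Rightarrow> complex) \<Rightarrow> nat \<Rightarrow> real \<Rightarrow> complex" where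
  "fshift s c F m x = (\<Sum>n\<le>m. of_real (s ^ (m - n) * c ^ n / fact n) * (xderiv ^^ n) (F (m - n)) x)"

definition fmul :: "(nat \<Rightarrow> real \<Rightarrow> complex) \<Rightarrow> (nat \<Rightarrow> real \<Rightarrow> complex) \<Rightarrow> nat \<Rightarrow> real \<Rightarrow> complex" where
  "fmul F G m x = (\<Sum>k\<le>m. F k x * G (m - k) x)"

definition fadd :: "(nat \<Rightarrow> real \<Rightarrow> complex) \<Rightarrow> (nat \<Rightarrow> real \<Rightarrow> complex) \<Rightarrow> nat \<Rightarrow> real \<Rightarrow> complex" where
  "fadd F G m x = F m x + G m x"

definition fsub :: "(nat \<Rightarrow> real \<Rightarrow> complex) \<Rightarrow> (nat \<Rightarrow> real \<Rightarrow> complex) \<Rightarrow> nat \<Rightarrow> real \<Rightarrow> complex" where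
  "fsub F G m x = F m x - G m x"

definition fscale :: "complex \<Rightarrow> (nat \<Rightarrow> real \<Rightarrow> complex) \<Rightarrow> nat \<Rightarrow> real \<Rightarrow> complex" where
  "fscale c F m x = c * F m x"

definition fone :: "nat \<Rightarrow> real \<Rightarrow> complex" where
  "fone m x = (if m = 0 then 1 else 0)"

end

theory Submission
  imports Defs "HOL-Computational_Algebra.Formal_Power_Series"
begin

text \<open>
  For fixed \<open>x\<close> the coefficients of \<open>F(s\<epsilon>; x + c\<epsilon>)\<close> form the power series
  \<open>\<Sum>\<^sub>n (c\<epsilon>)\<^sup>n/n! (\<partial>\<^sub>x\<^sup>n F)(s\<epsilon>; x)\<close>. By the Leibniz rule this Taylor shift is a ring
  homomorphism, and shifts compose: \<open>(s, c)\<close> after \<open>(s', c')\<close> is \<open>(s s', c + c' s)\<close>.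
  Shifting the functional equation by \<open>(1, \<sigma>/2)\<close> and by \<open>(-1, -\<sigma>/2)\<close> gives
  \<open>A (u + p) (u + v) = \<lambda> (u\<^sup>2 - 1)\<close> and \<open>B (v + q) (u + v) = \<lambda> (v\<^sup>2 - 1)\<close>, where
  \<open>u = V(\<epsilon>; x + \<sigma>\<epsilon>/2)\<close>, \<open>v = V(-\<epsilon>; x - \<sigma>\<epsilon>/2)\<close>, \<open>p = V(-\<epsilon>; x + 3\<sigma>\<epsilon>/2)\<close>,
  \<open>q = V(\<epsilon>; x - 3\<sigma>\<epsilon>/2)\<close> and \<open>A\<close>, \<open>B\<close> are the matching shifts of \<open>a\<close>. Hence
  \<open>(\<lambda>u - A (u + p)) (u + v) = \<lambda> (u v + 1) = (\<lambda>v - B (v + q)) (u + v)\<close>. The factor \<open>u + v\<close>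
  has constant term \<open>2 V\<^sub>0(x) \<noteq> 0\<close> and cancels, and the right-hand side is \<open>E\<close> with
  \<open>\<epsilon>\<close> replaced by \<open>-\<epsilon>\<close>.
\<close>

lemma xderiv_cong_open:
  assumes "open I" "y \<in> I" "\<And>z. z \<in> I \<Longrightarrow> f z = g z"
  shows "xderiv f y = xderiv g y"
proof -
  have "(f has_vector_derivative d) (at y) \<longleftrightarrow> (g has_vector_derivative d) (at y)" for d
    using has_vector_derivative_transform_within_open[OF _ assms(1,2), of f d g]
      has_vector_derivative_transform_within_open[OF _ assms(1,2), of g d f] assms(3)
    by auto
  then show ?thesis unfolding xderiv_def vector_derivative_def by simp
qed

lemma xderiv_funpow_cong_open:
  assumes "open I" "\<And>z. z \<in> I \<Longrightarrow> f z = g z" "y \<in> I"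
  shows "(xderiv ^^ n) f y = (xderiv ^^ n) g y"
  using assms(3)
proof (induction n arbitrary: y)
  case 0 then show ?case using assms by simp
next
  case (Suc n) then show ?case
    using xderiv_cong_open[OF assms(1), of y "(xderiv ^^ n) f" "(xderiv ^^ n) g"] by simp
qed

lemma xderiv_funpow_add: "(xderiv ^^ n) ((xderiv ^^ p) f) = (xderiv ^^ (n + p)) f"
  by (simp add: funpow_add)

lemma smooth_on_has_vector_derivative:
  assumes "smooth_on I f" "y \<in> I"
  shows "((xderiv ^^ n) f has_vector_derivative (xderiv ^^ Suc n) f y) (at y)"
  using assms unfolding smooth_on_def by (simp add: xderiv_def vector_derivative_works[symmetric])

lemma smooth_on_xderiv_funpow:
  assumes "smooth_on I f" shows "smooth_on I ((xderiv ^^ p) f)"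
  using assms unfolding smooth_on_def by (simp add: xderiv_funpow_add)

lemma smooth_on_by_derivative_family:
  assumes I: "open I" and h0: "\<And>y. y \<in> I \<Longrightarrow> h 0 y = g y"
    and hd: "\<And>n y. y \<in> I \<Longrightarrow> (h n has_vector_derivative h (Suc n) y) (at y)"
  shows "\<And>n y. y \<in> I \<Longrightarrow> (xderiv ^^ n) g y = h n y" and "smooth_on I g"
proof -
  have eq: "(xderiv ^^ n) g y = h n y" if "y \<in> I" for n y
    using that
  proof (induction n arbitrary: y)
    case 0 thus ?case using h0 by simp
  next
    case (Suc n y)
    have "(xderiv ^^ Suc n) g y = xderiv (h n) y"
      using xderiv_cong_open[OF I Suc.prems, of "(xderiv ^^ n) g" "h n"] Suc.IH by simp
    also have "\<dots> = h (Suc n) y"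
      unfolding xderiv_def using vector_derivative_at hd Suc.prems by blast
    finally show ?case .
  qed
  show "\<And>n y. y \<in> I \<Longrightarrow> (xderiv ^^ n) g y = h n y" using eq by blast
  show "smooth_on I g" unfolding smooth_on_def
  proof (intro allI ballI)
    fix n y assume y: "y \<in> I"
    have "((xderiv ^^ n) g has_vector_derivative h (Suc n) y) (at y)"
      by (rule has_vector_derivative_transform_within_open[OF hd[OF y] I y]) (simp add: eq)
    thus "(xderiv ^^ n) g differentiable at y" by (rule differentiableI_vector)
  qed
qed

lemma smooth_on_cong:
  assumes "open I" "smooth_on I f" "\<And>z. z \<in> I \<Longrightarrow> f z = g z"
  shows "smooth_on I g"
  by (rule smooth_on_by_derivative_family(2)[of I "\<lambda>n. (xderiv ^^ n) f"])
     (use assms smooth_on_has_vector_derivative in auto)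

lemma smooth_on_sum:
  fixes f :: "'j \<Rightarrow> real \<Rightarrow> complex"
  assumes I: "open I" and sm: "\<And>j. j \<in> J \<Longrightarrow> smooth_on I (f j)"
  shows "smooth_on I (\<lambda>y. \<Sum>j\<in>J. c j * f j y)"
    and "y \<in> I \<Longrightarrow>
      (xderiv ^^ n) (\<lambda>y. \<Sum>j\<in>J. c j * f j y) y = (\<Sum>j\<in>J. c j * (xderiv ^^ n) (f j) y)"
proof -
  let ?h = "\<lambda>n y. \<Sum>j\<in>J. c j * (xderiv ^^ n) (f j) y"
  have hd: "(?h n has_vector_derivative ?h (Suc n) y) (at y)" if "y \<in> I" for n y
    by (intro has_vector_derivative_sum has_vector_derivative_mult_right
        smooth_on_has_vector_derivative[of I] sm that)
  show "smooth_on I (\<lambda>y. \<Sum>j\<in>J. c j * f j y)"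
    by (rule smooth_on_by_derivative_family(2)[of I ?h]) (use I hd in auto)
  show "y \<in> I \<Longrightarrow> (xderiv ^^ n) (\<lambda>y. \<Sum>j\<in>J. c j * f j y) y = ?h n y"
    by (rule smooth_on_by_derivative_family(1)[of I ?h]) (use I hd in auto)
qed

lemma smooth_on_lincomb:
  fixes f g :: "real \<Rightarrow> complex"
  assumes I: "open I" and sm: "smooth_on I f" "smooth_on I g"
  shows "smooth_on I (\<lambda>y. a * f y + b * g y)"
    and "y \<in> I \<Longrightarrow> (xderiv ^^ n) (\<lambda>y. a * f y + b * g y) y
           = a * (xderiv ^^ n) f y + b * (xderiv ^^ n) g y"
proof -
  let ?h = "\<lambda>n y. a * (xderiv ^^ n) f y + b * (xderiv ^^ n) g y"
  have hd: "(?h n has_vector_derivative ?h (Suc n) y) (at y)" if "y \<in> I" for n y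
    by (intro has_vector_derivative_add has_vector_derivative_mult_right
        smooth_on_has_vector_derivative[of I] sm that)
  show "smooth_on I (\<lambda>y. a * f y + b * g y)"
    by (rule smooth_on_by_derivative_family(2)[of I ?h]) (use I hd in auto)
  show "y \<in> I \<Longrightarrow> (xderiv ^^ n) (\<lambda>y. a * f y + b * g y) y = ?h n y"
    by (rule smooth_on_by_derivative_family(1)[of I ?h]) (use I hd in auto)
qed

lemma smooth_on_const:
  fixes a :: complex
  assumes I: "open I"
  shows "smooth_on I (\<lambda>y. a)"
    and "y \<in> I \<Longrightarrow> (xderiv ^^ n) (\<lambda>y. a) y = (if n = 0 then a else 0)"
proof -
  let ?h = "\<lambda>n y. if n = 0 then a else 0"
  have hd: "(?h n has_vector_derivative ?h (Suc n) y) (at y)" for n y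
    by simp
  show "smooth_on I (\<lambda>y. a)"
    by (rule smooth_on_by_derivative_family(2)[of I ?h]) (use I hd in auto)
  show "y \<in> I \<Longrightarrow> (xderiv ^^ n) (\<lambda>y. a) y = ?h n y"
    by (rule smooth_on_by_derivative_family(1)[of I ?h]) (use I hd in auto)
qed

lemma smooth_on_of_real:
  fixes f :: "real \<Rightarrow> real"
  assumes I: "open I" and sm: "smooth_on I f"
  shows "smooth_on I (\<lambda>y. complex_of_real (f y))"
proof -
  let ?h = "\<lambda>n y. complex_of_real ((xderiv ^^ n) f y)"
  have "(?h n has_vector_derivative ?h (Suc n) y) (at y)" if "y \<in> I" for n y
    using smooth_on_has_vector_derivative[OF sm that]
    by (intro has_vector_derivative_of_real)
       (simp add: has_real_derivative_iff_has_vector_derivative)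
  then show ?thesis
    by (intro smooth_on_by_derivative_family(2)[of I ?h]) (use I in auto)
qed

lemma smooth_on_mult:
  fixes f g :: "real \<Rightarrow> complex"
  assumes I: "open I" and sf: "smooth_on I f" and sg: "smooth_on I g"
  shows "smooth_on I (\<lambda>y. f y * g y)"
    and "y \<in> I \<Longrightarrow> (xderiv ^^ n) (\<lambda>y. f y * g y) y =
           (\<Sum>i = 0..n. of_nat (n choose i) * (xderiv ^^ i) f y * (xderiv ^^ (n-i)) g y)"
proof -
  let ?h = "\<lambda>n y. \<Sum>i = 0..n. of_nat (n choose i) * (xderiv ^^ i) f y * (xderiv ^^ (n-i)) g y"
  have hd: "(?h n has_vector_derivative ?h (Suc n) y) (at y)" if y: "y \<in> I" for n y
  proof -
    let ?F = "\<lambda>i. (xderiv ^^ i) f y" and ?G = "\<lambda>i. (xderiv ^^ i) g y"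
    let ?d = "\<Sum>i = 0..n. of_nat (n choose i) * (?F i * ?G (Suc (n - i)) + ?F (Suc i) * ?G (n - i))"
    have pascal: "?d = ?h (Suc n) y"
      apply (simp add: Suc_choose algebra_simps sum.distrib)
      apply (subst (4) sum_Suc_reindex)
      apply (auto simp: algebra_simps Suc_diff_le intro: sum.cong)
      done
    have "(?h n has_vector_derivative ?d) (at y)"
      unfolding mult.assoc
      by (intro has_vector_derivative_sum has_vector_derivative_mult_right
          has_vector_derivative_mult smooth_on_has_vector_derivative[of I] sf sg y)
    thus ?thesis using pascal by simp
  qed
  show "smooth_on I (\<lambda>y. f y * g y)"
    by (rule smooth_on_by_derivative_family(2)[of I ?h]) (use I hd in auto)
  show "y \<in> I \<Longrightarrow> (xderiv ^^ n) (\<lambda>y. f y * g y) y = ?h n y"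
    by (rule smooth_on_by_derivative_family(1)[of I ?h]) (use I hd in auto)
qed

type_synonym series = "nat \<Rightarrow> real \<Rightarrow> complex"

definition smooth_series :: "real set \<Rightarrow> series \<Rightarrow> bool" where
  "smooth_series I F \<longleftrightarrow> (\<forall>k. smooth_on I (F k))"

definition series_deriv :: "nat \<Rightarrow> series \<Rightarrow> series" where
  "series_deriv n F = (\<lambda>k. (xderiv ^^ n) (F k))"

definition series_fps :: "series \<Rightarrow> real \<Rightarrow> complex fps" where
  "series_fps F x = Abs_fps (\<lambda>m. F m x)"

lemma series_fps_nth [simp]: "series_fps F x $ m = F m x"
  by (simp add: series_fps_def)

lemma series_fps_fmul: "series_fps (fmul F G) x = series_fps F x * series_fps G x"
  by (rule fps_ext) (simp add: fmul_def fps_mult_nth atLeast0AtMost)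

lemma series_fps_fadd: "series_fps (fadd F G) x = series_fps F x + series_fps G x"
  by (rule fps_ext) (simp add: fadd_def)

lemma series_fps_fsub: "series_fps (fsub F G) x = series_fps F x - series_fps G x"
  by (rule fps_ext) (simp add: fsub_def)

lemma series_fps_fscale: "series_fps (fscale l F) x = fps_const l * series_fps F x"
  by (rule fps_ext) (simp add: fscale_def)

lemma smooth_series_fadd:
  "open I \<Longrightarrow> smooth_series I F \<Longrightarrow> smooth_series I G \<Longrightarrow> smooth_series I (fadd F G)"
  using smooth_on_lincomb(1)[of I "F k" "G k" 1 1 for k]
  by (auto simp: smooth_series_def fadd_def[abs_def])

lemma smooth_series_fsub:
  "open I \<Longrightarrow> smooth_series I F \<Longrightarrow> smooth_series I G \<Longrightarrow> smooth_series I (fsub F G)"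
  using smooth_on_lincomb(1)[of I "F k" "G k" 1 "-1" for k]
  by (auto simp: smooth_series_def fsub_def[abs_def])

lemma smooth_series_fscale: "open I \<Longrightarrow> smooth_series I F \<Longrightarrow> smooth_series I (fscale l F)"
  using smooth_on_lincomb(1)[of I "F k" "F k" l 0 for k]
  by (auto simp: smooth_series_def fscale_def[abs_def])

lemma smooth_series_fone: "open I \<Longrightarrow> smooth_series I fone"
  using smooth_on_const(1)[of I]
  by (auto simp: smooth_series_def fone_def[abs_def])

lemma smooth_series_fmul:
  assumes I: "open I" and F: "smooth_series I F" and G: "smooth_series I G"
  shows "smooth_series I (fmul F G)"
  unfolding smooth_series_def
proof
  fix m
  have "smooth_on I (\<lambda>y. \<Sum>k\<le>m. 1 * (F k y * G (m - k) y))"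
    by (rule smooth_on_sum(1)[OF I])
       (use F G in \<open>auto simp: smooth_series_def intro: smooth_on_mult[OF I]\<close>)
  then show "smooth_on I (fmul F G m)" by (simp add: fmul_def[abs_def])
qed

lemma fshift_eq_lambda:
  "fshift s c F m = (\<lambda>y. \<Sum>n\<le>m. of_real (s ^ (m - n) * c ^ n / fact n) * (xderiv ^^ n) (F (m - n)) y)"
  by (simp add: fshift_def fun_eq_iff)

lemma smooth_series_fshift:
  assumes I: "open I" and F: "smooth_series I F"
  shows "smooth_series I (fshift s c F)"
  unfolding smooth_series_def fshift_eq_lambda
  by (intro allI smooth_on_sum(1)[OF I])
     (use F in \<open>auto simp: smooth_series_def intro: smooth_on_xderiv_funpow\<close>)

lemma xderiv_funpow_fshift:
  assumes I: "open I" and F: "smooth_series I F" and y: "y \<in> I"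
  shows "(xderiv ^^ p) (fshift s c F m) y = fshift s c (series_deriv p F) m y"
  unfolding fshift_eq_lambda
  using F by (subst smooth_on_sum(2)[OF I _ y])
    (auto simp: smooth_series_def series_deriv_def xderiv_funpow_add add.commute
          intro!: smooth_on_xderiv_funpow)

lemma xderiv_funpow_fmul:
  assumes I: "open I" and F: "smooth_series I F" and G: "smooth_series I G" and y: "y \<in> I"
  shows "(xderiv ^^ p) (fmul F G m) y =
     (\<Sum>k\<le>m. \<Sum>i = 0..p. of_nat (p choose i) * (xderiv ^^ i) (F k) y * (xderiv ^^ (p-i)) (G (m - k)) y)"
proof -
  let ?P = "\<lambda>k y. F k y * G (m - k) y"
  have smooth: "smooth_on I (?P k)" for k
    using F G by (auto simp: smooth_series_def intro: smooth_on_mult(1)[OF I])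
  have "fmul F G m = (\<lambda>y. \<Sum>k\<le>m. 1 * ?P k y)"
    by (simp add: fmul_def fun_eq_iff)
  then have "(xderiv ^^ p) (fmul F G m) y = (\<Sum>k\<le>m. 1 * (xderiv ^^ p) (?P k) y)"
    using smooth_on_sum(2)[OF I smooth y, where J = "{..m}" and c = "\<lambda>_. 1"] by simp
  also have "\<dots> = (\<Sum>k\<le>m. \<Sum>i = 0..p.
      of_nat (p choose i) * (xderiv ^^ i) (F k) y * (xderiv ^^ (p-i)) (G (m - k)) y)"
    using F G by (simp add: smooth_on_mult(2)[OF I _ _ y] smooth_series_def)
  finally show ?thesis .
qed

lemma series_fps_deriv_fmul:
  assumes I: "open I" and F: "smooth_series I F" and G: "smooth_series I G" and y: "y \<in> I"
  shows "series_fps (series_deriv p (fmul F G)) y =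
     (\<Sum>i = 0..p. fps_const (of_nat (p choose i)) *
        (series_fps (series_deriv i F) y * series_fps (series_deriv (p - i) G) y))"
proof (rule fps_ext)
  fix m
  show "series_fps (series_deriv p (fmul F G)) y $ m = (\<Sum>i = 0..p. fps_const (of_nat (p choose i)) *
        (series_fps (series_deriv i F) y * series_fps (series_deriv (p - i) G) y)) $ m"
    apply (simp only: fps_sum_nth fps_mult_left_const_nth)
    apply (simp add: fps_mult_nth series_deriv_def xderiv_funpow_fmul[OF I F G y]
        sum_distrib_left atLeast0AtMost)
    apply (subst sum.swap)
    apply (simp add: mult.assoc)
    done
qed

lemma xderiv_funpow_fadd:
  assumes I: "open I" and F: "smooth_series I F" and G: "smooth_series I G" and y: "y \<in> I"
  shows "(xderiv ^^ n) (fadd F G k) y = (xderiv ^^ n) (F k) y + (xderiv ^^ n) (G k) y"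
proof -
  have "(xderiv ^^ n) (\<lambda>y. 1 * F k y + 1 * G k y) y = 1 * (xderiv ^^ n) (F k) y + 1 * (xderiv ^^ n) (G k) y"
    by (rule smooth_on_lincomb(2)[OF I]) (use F G y in \<open>auto simp: smooth_series_def\<close>)
  thus ?thesis by (simp add: fadd_def[abs_def])
qed

lemma xderiv_funpow_fsub:
  assumes I: "open I" and F: "smooth_series I F" and G: "smooth_series I G" and y: "y \<in> I"
  shows "(xderiv ^^ n) (fsub F G k) y = (xderiv ^^ n) (F k) y - (xderiv ^^ n) (G k) y"
proof -
  have "(xderiv ^^ n) (\<lambda>y. 1 * F k y + (-1) * G k y) y = 1 * (xderiv ^^ n) (F k) y + (-1) * (xderiv ^^ n) (G k) y"
    by (rule smooth_on_lincomb(2)[OF I]) (use F G y in \<open>auto simp: smooth_series_def\<close>)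
  thus ?thesis by (simp add: fsub_def[abs_def])
qed

lemma xderiv_funpow_fscale:
  assumes I: "open I" and F: "smooth_series I F" and y: "y \<in> I"
  shows "(xderiv ^^ n) (fscale l F k) y = l * (xderiv ^^ n) (F k) y"
proof -
  have "(xderiv ^^ n) (\<lambda>y. l * F k y + 0 * F k y) y = l * (xderiv ^^ n) (F k) y + 0 * (xderiv ^^ n) (F k) y"
    by (rule smooth_on_lincomb(2)[OF I]) (use F y in \<open>auto simp: smooth_series_def\<close>)
  thus ?thesis by (simp add: fscale_def[abs_def])
qed

lemma xderiv_funpow_fone:
  assumes I: "open I" and y: "y \<in> I"
  shows "(xderiv ^^ n) (fone k) y = (if n = 0 \<and> k = 0 then 1 else 0)"
proof -
  have "fone k = (\<lambda>y. if k = 0 then 1 else 0)" by (simp add: fone_def fun_eq_iff)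
  thus ?thesis using smooth_on_const(2)[OF I y, where a="if k = 0 then 1 else 0" and n=n] by simp
qed

definition fps_scale :: "real \<Rightarrow> complex fps \<Rightarrow> complex fps" where
  "fps_scale s f = Abs_fps (\<lambda>k. of_real (s ^ k) * f $ k)"

lemma fps_scale_nth [simp]: "fps_scale s f $ k = of_real (s ^ k) * f $ k"
  by (simp add: fps_scale_def)

lemma fps_scale_mult: "fps_scale s (f * g) = fps_scale s f * fps_scale s g"
proof (rule fps_ext)
  fix n
  have "(\<Sum>i=0..n. of_real (s ^ n) * (f $ i * g $ (n - i))) =
        (\<Sum>i=0..n. of_real (s ^ i) * f $ i * (of_real (s ^ (n - i)) * g $ (n - i)))"
  proof (rule sum.cong)
    fix i assume "i \<in> {0..n}"
    hence "s ^ n = s ^ i * s ^ (n - i)" by (simp add: power_add[symmetric])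
    thus "of_real (s ^ n) * (f $ i * g $ (n - i)) =
          of_real (s ^ i) * f $ i * (of_real (s ^ (n - i)) * g $ (n - i))"
      by (simp add: algebra_simps)
  qed simp
  thus "fps_scale s (f * g) $ n = (fps_scale s f * fps_scale s g) $ n"
    by (simp add: fps_mult_nth sum_distrib_left)
qed

lemma fps_scale_sum: "fps_scale s (\<Sum>i\<in>A. f i) = (\<Sum>i\<in>A. fps_scale s (f i))"
  by (rule fps_ext) (simp add: fps_sum_nth sum_distrib_left)

lemma fps_scale_const: "fps_scale s (fps_const a) = fps_const a"
  by (rule fps_ext) simp

lemma fps_scale_const_mult: "fps_scale s (fps_const a * f) = fps_const a * fps_scale s f"
  by (rule fps_ext) simp

lemma fps_scale_X_power_mult:
  "fps_scale s (fps_X ^ j * f) = fps_const (of_real (s ^ j)) * (fps_X ^ j * fps_scale s f)"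
  by (rule fps_ext) (simp add: fps_X_power_mult_nth power_add[symmetric])

lemma fps_scale_fps_scale: "fps_scale s (fps_scale s' f) = fps_scale (s * s') f"
  by (rule fps_ext) (simp add: power_mult_distrib)

lemma fps_scale_minus_one_invariant_odd_nth:
  fixes f :: "complex fps"
  assumes "fps_scale (-1) f = f" "odd m"
  shows "f $ m = 0"
proof -
  have "- (f $ m) = f $ m"
    using arg_cong[OF assms(1), of "\<lambda>g. g $ m"] assms(2) by simp
  then show ?thesis by simp
qed

lemma fps_const_sum: "fps_const (\<Sum>i\<in>A. f i) = (\<Sum>i\<in>A. fps_const (f i))"
proof (induction A rule: infinite_finite_induct)
  case (insert a A)
  then show ?case by (simp add: fps_const_add[symmetric] del: fps_const_add)
qed auto

definition fps_eq_upto :: "nat \<Rightarrow> complex fps \<Rightarrow> complex fps \<Rightarrow> bool" where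
  "fps_eq_upto N f g \<longleftrightarrow> (\<forall>k\<le>N. f $ k = g $ k)"

lemma fps_eq_upto_refl: "fps_eq_upto N f f"
  by (simp add: fps_eq_upto_def)

lemma fps_eq_upto_mult:
  "fps_eq_upto N f f' \<Longrightarrow> fps_eq_upto N g g' \<Longrightarrow> fps_eq_upto N (f * g) (f' * g')"
  unfolding fps_eq_upto_def fps_mult_nth by (auto intro!: sum.cong)

lemma fps_eq_upto_sum:
  "(\<And>i. i \<in> A \<Longrightarrow> fps_eq_upto N (f i) (g i)) \<Longrightarrow>
    fps_eq_upto N (\<Sum>i\<in>A. f i) (\<Sum>i\<in>A. g i)"
  unfolding fps_eq_upto_def by (auto simp: fps_sum_nth intro!: sum.cong)

lemma fps_eq_upto_fps_scale: "fps_eq_upto N f g \<Longrightarrow> fps_eq_upto N (fps_scale s f) (fps_scale s g)"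
  unfolding fps_eq_upto_def by auto

lemma fps_eq_upto_X_power_mult_zero: "N < j \<Longrightarrow> fps_eq_upto N (fps_const a * (fps_X ^ j * f)) 0"
  unfolding fps_eq_upto_def by (auto simp: fps_X_power_mult_nth)

lemma fps_eq_upto_square_triangle:
  assumes "\<And>i j. m < i + j \<Longrightarrow> fps_eq_upto m (P i j) 0"
  shows "fps_eq_upto m (\<Sum>(i,j)\<in>{..m}\<times>{..m}. P i j) (\<Sum>(i,j)\<in>{(i,j). i + j \<le> m}. P i j)"
proof -
  let ?D = "{..m}\<times>{..m} - {(i,j). i + j \<le> m}"
  have "{(i,j). i + j \<le> m} \<subseteq> {..m}\<times>{..m}" by auto
  then have "(\<Sum>(i,j)\<in>{..m}\<times>{..m}. P i j) =
      (\<Sum>(i,j)\<in>?D. P i j) + (\<Sum>(i,j)\<in>{(i,j). i + j \<le> m}. P i j)"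
    using sum.subset_diff[of _ "{..m}\<times>{..m}"] by simp
  moreover have "fps_eq_upto m (\<Sum>(i,j)\<in>?D. P i j) (\<Sum>(i,j)\<in>?D. 0)"
    by (rule fps_eq_upto_sum) (use assms in auto)
  ultimately show ?thesis unfolding fps_eq_upto_def by auto
qed

definition taylor_term :: "real \<Rightarrow> real \<Rightarrow> series \<Rightarrow> real \<Rightarrow> nat \<Rightarrow> complex fps" where
  "taylor_term s c F x n =
     fps_const (of_real (c ^ n / fact n)) * (fps_X ^ n * fps_scale s (series_fps (series_deriv n F) x))"

lemma fps_eq_upto_fshift_taylor_terms:
  "fps_eq_upto N (series_fps (fshift s c F) x) (\<Sum>n\<le>N. taylor_term s c F x n)"
  unfolding fps_eq_upto_def
proof (intro allI impI)
  fix k assume k: "k \<le> N"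
  let ?t = "\<lambda>n. of_real (c ^ n / fact n) * (of_real (s ^ (k - n)) * (xderiv ^^ n) (F (k - n)) x)"
  have "(\<Sum>n\<le>N. taylor_term s c F x n) $ k = (\<Sum>n\<in>{..N}. if n \<in> {..k} then ?t n else 0)"
    by (auto simp: fps_sum_nth taylor_term_def fps_X_power_mult_nth series_deriv_def intro!: sum.cong)
  also have "\<dots> = (\<Sum>n\<in>{..N} \<inter> {..k}. ?t n)"
    by (rule sum.inter_restrict[symmetric]) simp
  also have "{..N} \<inter> {..k} = {..k}" using k by auto
  finally show "series_fps (fshift s c F) x $ k = (\<Sum>n\<le>N. taylor_term s c F x n) $ k"
    by (simp add: fshift_def algebra_simps)
qed

lemma exp_coeff_binomial:
  fixes c :: real assumes "i \<le> n"
  shows "complex_of_real (c ^ n / fact n) * of_nat (n choose i)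
       = complex_of_real (c ^ i / fact i) * complex_of_real (c ^ (n - i) / fact (n - i))"
proof -
  have "real (n choose i) = fact n / (fact i * fact (n - i))" using binomial_fact[OF assms] by simp
  moreover have "c ^ n = c ^ i * c ^ (n - i)" using assms by (simp add: power_add[symmetric])
  ultimately have "c ^ n / fact n * real (n choose i) = c ^ i / fact i * (c ^ (n - i) / fact (n - i))"
    by (simp add: field_simps)
  thus ?thesis by (metis of_real_mult of_real_of_nat_eq)
qed

lemma exp_coeff_binomial_sum:
  fixes c d :: real
  shows "(\<Sum>n\<le>p. complex_of_real (c ^ n / fact n * (d ^ (p - n) / fact (p - n))))
       = complex_of_real ((c + d) ^ p / fact p)"
proof -
  have "(c + d) ^ p / fact p = (\<Sum>n\<le>p. real (p choose n) * c ^ n * d ^ (p - n)) / fact p"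
    by (simp add: binomial_ring)
  also have "\<dots> = (\<Sum>n\<le>p. c ^ n / fact n * (d ^ (p - n) / fact (p - n)))"
    unfolding sum_divide_distrib
  proof (rule sum.cong)
    fix n assume "n \<in> {..p}"
    hence "real (p choose n) = fact p / (fact n * fact (p - n))" using binomial_fact[of n p] by simp
    thus "real (p choose n) * c ^ n * d ^ (p - n) / fact p = c ^ n / fact n * (d ^ (p - n) / fact (p - n))"
      by (simp add: field_simps)
  qed simp
  finally show ?thesis by (simp only: of_real_sum[symmetric])
qed

lemma taylor_term_fmul:
  assumes I: "open I" and F: "smooth_series I F" and G: "smooth_series I G" and x: "x \<in> I"
  shows "taylor_term s c (fmul F G) x n = (\<Sum>i=0..n. taylor_term s c F x i * taylor_term s c G x (n - i))"
proof -
  let ?a = "\<lambda>i. fps_scale s (series_fps (series_deriv i F) x)"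
  let ?b = "\<lambda>i. fps_scale s (series_fps (series_deriv i G) x)"
  have X: "(fps_X::complex fps) ^ n = fps_X ^ i * fps_X ^ (n - i)" if "i \<le> n" for i
    using that by (simp add: power_add[symmetric])
  have "taylor_term s c (fmul F G) x n = (\<Sum>i=0..n. fps_const (of_real (c ^ n / fact n)) * (fps_X ^ n *
          (fps_const (of_nat (n choose i)) * (?a i * ?b (n - i)))))"
    unfolding taylor_term_def series_fps_deriv_fmul[OF I F G x] fps_scale_sum
      fps_scale_const_mult fps_scale_mult fps_scale_const
    by (simp add: sum_distrib_left)
  also have "\<dots> = (\<Sum>i=0..n. fps_const (of_real (c ^ n / fact n) * of_nat (n choose i)) *
          (fps_X ^ i * fps_X ^ (n - i)) * (?a i * ?b (n - i)))"
    by (intro sum.cong refl) (simp add: X fps_const_mult[symmetric] mult_ac del: fps_const_mult)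
  also have "\<dots> = (\<Sum>i=0..n. taylor_term s c F x i * taylor_term s c G x (n - i))"
  proof (intro sum.cong refl)
    fix i assume "i \<in> {0..n}"
    then have "complex_of_real (c ^ n / fact n) * of_nat (n choose i) =
        complex_of_real (c ^ i / fact i) * complex_of_real (c ^ (n - i) / fact (n - i))"
      by (intro exp_coeff_binomial) simp
    then show "fps_const (of_real (c ^ n / fact n) * of_nat (n choose i)) *
          (fps_X ^ i * fps_X ^ (n - i)) * (?a i * ?b (n - i)) =
        taylor_term s c F x i * taylor_term s c G x (n - i)"
      unfolding taylor_term_def by (simp only: fps_const_mult[symmetric] mult_ac)
  qed
  finally show ?thesis .
qed

lemma series_fps_fshift_fmul:
  assumes I: "open I" and F: "smooth_series I F" and G: "smooth_series I G" and x: "x \<in> I"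
  shows "series_fps (fshift s c (fmul F G)) x = series_fps (fshift s c F) x * series_fps (fshift s c G) x"
proof (rule fps_ext)
  fix m
  let ?P = "\<lambda>i j. taylor_term s c F x i * taylor_term s c G x j"
  have "fps_eq_upto m (series_fps (fshift s c (fmul F G)) x) (\<Sum>n\<le>m. taylor_term s c (fmul F G) x n)"
    by (rule fps_eq_upto_fshift_taylor_terms)
  also have "(\<Sum>n\<le>m. taylor_term s c (fmul F G) x n) = (\<Sum>n\<le>m. \<Sum>i\<le>n. ?P i (n - i))"
    by (simp add: taylor_term_fmul[OF I F G x] atLeast0AtMost)
  also have "\<dots> = (\<Sum>(i,j)\<in>{(i,j). i + j \<le> m}. ?P i j)"
    by (rule sum.triangle_reindex_eq[symmetric])
  finally have lhs: "fps_eq_upto m (series_fps (fshift s c (fmul F G)) x) (\<Sum>(i,j)\<in>{(i,j). i + j \<le> m}. ?P i j)" .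
  have "fps_eq_upto m (series_fps (fshift s c F) x * series_fps (fshift s c G) x)
      ((\<Sum>i\<le>m. taylor_term s c F x i) * (\<Sum>j\<le>m. taylor_term s c G x j))"
    by (intro fps_eq_upto_mult fps_eq_upto_fshift_taylor_terms)
  also have "(\<Sum>i\<le>m. taylor_term s c F x i) * (\<Sum>j\<le>m. taylor_term s c G x j) =
      (\<Sum>(i,j)\<in>{..m}\<times>{..m}. ?P i j)"
    by (simp add: sum_product sum.cartesian_product)
  finally have rhs: "fps_eq_upto m (series_fps (fshift s c F) x * series_fps (fshift s c G) x)
      (\<Sum>(i,j)\<in>{..m}\<times>{..m}. ?P i j)" .
  have "fps_eq_upto m (\<Sum>(i,j)\<in>{..m}\<times>{..m}. ?P i j) (\<Sum>(i,j)\<in>{(i,j). i + j \<le> m}. ?P i j)"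
  proof (rule fps_eq_upto_square_triangle)
    fix i j assume "m < i + j"
    have "?P i j = fps_const (of_real (c ^ i / fact i) * of_real (c ^ j / fact j)) *
        (fps_X ^ (i + j) * (fps_scale s (series_fps (series_deriv i F) x) *
                            fps_scale s (series_fps (series_deriv j G) x)))"
      unfolding taylor_term_def
      by (simp only: power_add fps_const_mult[symmetric] mult.assoc mult.left_commute mult.commute)
    then show "fps_eq_upto m (?P i j) 0"
      using fps_eq_upto_X_power_mult_zero[OF \<open>m < i + j\<close>] by simp
  qed
  with lhs rhs show "series_fps (fshift s c (fmul F G)) x $ m =
      (series_fps (fshift s c F) x * series_fps (fshift s c G) x) $ m"
    unfolding fps_eq_upto_def by auto
qed

lemma series_fps_deriv_fshift:
  assumes I: "open I" and F: "smooth_series I F" and x: "x \<in> I"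
  shows "series_fps (series_deriv n (fshift s c F)) x = series_fps (fshift s c (series_deriv n F)) x"
  by (rule fps_ext) (simp add: series_deriv_def xderiv_funpow_fshift[OF I F x])

lemma taylor_term_fshift:
  assumes I: "open I" and F: "smooth_series I F" and x: "x \<in> I"
  shows "fps_eq_upto m (taylor_term s c (fshift s' c' F) x n)
    (\<Sum>j\<le>m. fps_const (of_real (c ^ n / fact n * ((c' * s) ^ j / fact j))) *
       (fps_X ^ (n + j) * fps_scale (s * s') (series_fps (series_deriv (n + j) F) x)))"
proof -
  let ?k = "fps_const (of_real (c ^ n / fact n))"
  have "taylor_term s c (fshift s' c' F) x n =
      ?k * (fps_X ^ n * fps_scale s (series_fps (fshift s' c' (series_deriv n F)) x))"
    unfolding taylor_term_def series_fps_deriv_fshift[OF I F x] ..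
  moreover have "fps_eq_upto m
      (?k * (fps_X ^ n * fps_scale s (series_fps (fshift s' c' (series_deriv n F)) x)))
      (?k * (fps_X ^ n * fps_scale s (\<Sum>j\<le>m. taylor_term s' c' (series_deriv n F) x j)))"
    by (intro fps_eq_upto_mult fps_eq_upto_refl fps_eq_upto_fps_scale fps_eq_upto_fshift_taylor_terms)
  moreover have "?k * (fps_X ^ n * fps_scale s (\<Sum>j\<le>m. taylor_term s' c' (series_deriv n F) x j)) =
      (\<Sum>j\<le>m. fps_const (of_real (c ^ n / fact n * ((c' * s) ^ j / fact j))) *
         (fps_X ^ (n + j) * fps_scale (s * s') (series_fps (series_deriv (n + j) F) x)))"
    unfolding fps_scale_sum sum_distrib_left
  proof (rule sum.cong[OF refl])
    fix j
    have deriv: "series_deriv j (series_deriv n F) = series_deriv (n + j) F"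
      by (simp add: series_deriv_def xderiv_funpow_add add.commute)
    have coeff: "(c' * s) ^ j / fact j = c' ^ j / fact j * s ^ j"
      by (simp add: power_mult_distrib)
    show "?k * (fps_X ^ n * fps_scale s (taylor_term s' c' (series_deriv n F) x j)) =
        fps_const (of_real (c ^ n / fact n * ((c' * s) ^ j / fact j))) *
         (fps_X ^ (n + j) * fps_scale (s * s') (series_fps (series_deriv (n + j) F) x))"
      unfolding taylor_term_def fps_scale_const_mult fps_scale_X_power_mult fps_scale_fps_scale
      by (simp only: deriv coeff power_add of_real_mult fps_const_mult[symmetric] mult_ac)
  qed
  ultimately show ?thesis by simp
qed

lemma series_fps_fshift_fshift:
  assumes I: "open I" and F: "smooth_series I F" and x: "x \<in> I"
  shows "series_fps (fshift s c (fshift s' c' F)) x = series_fps (fshift (s * s') (c + c' * s) F) x"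
proof (rule fps_ext)
  fix m
  define T where "T n j = fps_const (of_real (c ^ n / fact n * ((c' * s) ^ j / fact j))) *
     (fps_X ^ (n + j) * fps_scale (s * s') (series_fps (series_deriv (n + j) F) x))" for n j
  have "fps_eq_upto m (series_fps (fshift s c (fshift s' c' F)) x) (\<Sum>n\<le>m. taylor_term s c (fshift s' c' F) x n)"
    by (rule fps_eq_upto_fshift_taylor_terms)
  also have "fps_eq_upto m (\<Sum>n\<le>m. taylor_term s c (fshift s' c' F) x n) (\<Sum>n\<le>m. \<Sum>j\<le>m. T n j)"
    unfolding T_def by (intro fps_eq_upto_sum taylor_term_fshift[OF I F x])
  moreover have "(\<Sum>n\<le>m. \<Sum>j\<le>m. T n j) = (\<Sum>(n,j)\<in>{..m}\<times>{..m}. T n j)"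
    by (simp add: sum.cartesian_product)
  moreover have "fps_eq_upto m (\<Sum>(n,j)\<in>{..m}\<times>{..m}. T n j) (\<Sum>(n,j)\<in>{(n,j). n + j \<le> m}. T n j)"
    by (rule fps_eq_upto_square_triangle) (simp add: T_def fps_eq_upto_X_power_mult_zero)
  moreover have "(\<Sum>(n,j)\<in>{(n,j). n + j \<le> m}. T n j) = (\<Sum>p\<le>m. \<Sum>n\<le>p. T n (p - n))"
    by (rule sum.triangle_reindex_eq)
  moreover have "(\<Sum>n\<le>p. T n (p - n)) = taylor_term (s * s') (c + c' * s) F x p" for p
  proof -
    have "(\<Sum>n\<le>p. T n (p - n)) =
        fps_const (\<Sum>n\<le>p. of_real (c ^ n / fact n * ((c' * s) ^ (p - n) / fact (p - n)))) *
          (fps_X ^ p * fps_scale (s * s') (series_fps (series_deriv p F) x))"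
      unfolding T_def fps_const_sum sum_distrib_right by (intro sum.cong) auto
    then show ?thesis
      unfolding exp_coeff_binomial_sum taylor_term_def .
  qed
  moreover have "fps_eq_upto m (series_fps (fshift (s * s') (c + c' * s) F) x)
      (\<Sum>p\<le>m. taylor_term (s * s') (c + c' * s) F x p)"
    by (rule fps_eq_upto_fshift_taylor_terms)
  ultimately show "series_fps (fshift s c (fshift s' c' F)) x $ m =
      series_fps (fshift (s * s') (c + c' * s) F) x $ m"
    unfolding fps_eq_upto_def by auto
qed

lemma series_fps_fshift_fadd:
  assumes I: "open I" and F: "smooth_series I F" and G: "smooth_series I G" and x: "x \<in> I"
  shows "series_fps (fshift s c (fadd F G)) x = series_fps (fshift s c F) x + series_fps (fshift s c G) x"
  by (rule fps_ext) (simp add: fshift_def xderiv_funpow_fadd[OF I F G x] sum.distrib distrib_left)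

lemma series_fps_fshift_fsub:
  assumes I: "open I" and F: "smooth_series I F" and G: "smooth_series I G" and x: "x \<in> I"
  shows "series_fps (fshift s c (fsub F G)) x = series_fps (fshift s c F) x - series_fps (fshift s c G) x"
  by (rule fps_ext) (simp add: fshift_def xderiv_funpow_fsub[OF I F G x] sum_subtractf right_diff_distrib)

lemma series_fps_fshift_fscale:
  assumes I: "open I" and F: "smooth_series I F" and x: "x \<in> I"
  shows "series_fps (fshift s c (fscale l F)) x = fps_const l * series_fps (fshift s c F) x"
  by (rule fps_ext) (simp add: fshift_def xderiv_funpow_fscale[OF I F x] sum_distrib_left mult.left_commute)

lemma series_fps_fshift_fone:
  assumes I: "open I" and x: "x \<in> I"
  shows "series_fps (fshift s c fone) x = 1"
proof (rule fps_ext)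
  fix m
  have "fshift s c fone m x = (\<Sum>n\<le>m. if n = 0 then (if m = 0 then 1 else 0) else 0)"
    unfolding fshift_def xderiv_funpow_fone[OF I x] by (rule sum.cong) auto
  then show "series_fps (fshift s c fone) x $ m = (1::complex fps) $ m" by simp
qed

lemma series_fps_fshift_cong:
  assumes I: "open I" and E: "\<And>k y. y \<in> I \<Longrightarrow> F k y = G k y" and x: "x \<in> I"
  shows "series_fps (fshift s c F) x = series_fps (fshift s c G) x"
  by (rule fps_ext) (simp add: fshift_def xderiv_funpow_cong_open[OF I E x])

lemma series_fps_fshift_reflect: "series_fps (fshift (-1) 0 F) x = fps_scale (-1) (series_fps F x)"
proof (rule fps_ext)
  fix m
  have "fshift (-1) 0 F m x = (\<Sum>n\<le>m. if n = 0 then (-1) ^ m * F m x else 0)"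
    unfolding fshift_def by (rule sum.cong) auto
  then show "series_fps (fshift (-1) 0 F) x $ m = fps_scale (-1) (series_fps F x) $ m" by simp
qed

lemma series_fps_fshift_functional_equation:
  assumes I: "open I" and A: "smooth_series I A" and W: "smooth_series I W" and x: "x \<in> I"
    and eq: "\<And>m y. y \<in> I \<Longrightarrow>
      fmul A (fmul (fadd W (fshift (-1) (-1) W)) (fadd W (fshift (-1) 1 W))) m y =
      fscale l (fsub (fmul W W) fone) m y"
    and de: "{d, e} = {c - s, c + s}"
  shows "series_fps (fshift s c A) x *
      ((series_fps (fshift s c W) x + series_fps (fshift (-s) d W) x) *
       (series_fps (fshift s c W) x + series_fps (fshift (-s) e W) x)) =
    fps_const l * (series_fps (fshift s c W) x * series_fps (fshift s c W) x - 1)"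
proof -
  let ?u = "series_fps (fshift s c W) x"
  note smooth = smooth_series_fmul[OF I] smooth_series_fadd[OF I] smooth_series_fsub[OF I]
    smooth_series_fone[OF I] smooth_series_fshift[OF I] A W
  have minus: "series_fps (fshift s c (fshift (-1) (-1) W)) x = series_fps (fshift (-s) (c - s) W) x"
    using series_fps_fshift_fshift[OF I W x, where s = s and c = c and s' = "-1" and c' = "-1"] by simp
  have plus: "series_fps (fshift s c (fshift (-1) 1 W)) x = series_fps (fshift (-s) (c + s) W) x"
    using series_fps_fshift_fshift[OF I W x, where s = s and c = c and s' = "-1" and c' = 1] by simp
  have "series_fps (fshift s c (fmul A (fmul (fadd W (fshift (-1) (-1) W)) (fadd W (fshift (-1) 1 W))))) x
      = series_fps (fshift s c (fscale l (fsub (fmul W W) fone))) x"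
    by (rule series_fps_fshift_cong[OF I eq x])
  then have "series_fps (fshift s c A) x *
      ((?u + series_fps (fshift (-s) (c - s) W) x) * (?u + series_fps (fshift (-s) (c + s) W) x)) =
    fps_const l * (?u * ?u - 1)"
    by (simp add: series_fps_fshift_fmul[OF I _ _ x] series_fps_fshift_fadd[OF I _ _ x]
        series_fps_fshift_fscale[OF I _ x] series_fps_fshift_fsub[OF I _ _ x]
        series_fps_fshift_fone[OF I x] smooth minus plus)
  moreover have "d = c - s \<and> e = c + s \<or> d = c + s \<and> e = c - s"
    using de by (auto simp: doubleton_eq_iff)
  ultimately show ?thesis by (auto simp: mult.commute)
qed

lemma cancel_common_factor_of_equations:
  fixes u v p q a b l :: "'a::idom"
  assumes "a * ((u + p) * (u + v)) = l * (u * u - 1)"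
    and "b * ((v + q) * (u + v)) = l * (v * v - 1)"
    and "u + v \<noteq> 0"
  shows "l * u - a * (u + p) = l * v - b * (v + q)"
proof -
  have "(l * u - a * (u + p)) * (u + v) = l * (u * v + 1)"
    using assms(1) by (simp add: algebra_simps)
  also have "\<dots> = (l * v - b * (v + q)) * (u + v)"
    using assms(2) by (simp add: algebra_simps)
  finally show ?thesis using assms(3) by simp
qed

text \<open>The paper's \<open>E\<^sub>-\<close> is \<open>sg = -1\<close> and \<open>E\<^sub>+\<close> is \<open>sg = 1\<close>.\<close>
definition E_series :: "complex \<Rightarrow> real \<Rightarrow> series \<Rightarrow> series \<Rightarrow> series" where
  "E_series l sg A W = fsub (fscale l (fshift 1 (sg / 2) W))
     (fmul (fshift 1 (sg / 2) A) (fadd (fshift 1 (sg / 2) W) (fshift (-1) (3 * sg / 2) W)))"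

lemma E_series_even:
  assumes I: "open I" and A: "smooth_series I A" and W: "smooth_series I W" and x: "x \<in> I"
    and eq: "\<And>m y. y \<in> I \<Longrightarrow>
      fmul A (fmul (fadd W (fshift (-1) (-1) W)) (fadd W (fshift (-1) 1 W))) m y =
      fscale l (fsub (fmul W W) fone) m y"
    and W0: "W 0 x \<noteq> 0" and sg: "sg \<in> {-1, 1}"
  shows "fps_scale (-1) (series_fps (E_series l sg A W) x) = series_fps (E_series l sg A W) x"
proof -
  define u where "u = series_fps (fshift 1 (sg / 2) W) x"
  define v where "v = series_fps (fshift (-1) (- sg / 2) W) x"
  define p where "p = series_fps (fshift (-1) (3 * sg / 2) W) x"
  define q where "q = series_fps (fshift 1 (- 3 * sg / 2) W) x"
  define a where "a = series_fps (fshift 1 (sg / 2) A) x"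
  define b where "b = series_fps (fshift (-1) (- sg / 2) A) x"
  have "{3 * sg / 2, - sg / 2} = {sg / 2 - 1, sg / 2 + 1}" using sg by auto
  from series_fps_fshift_functional_equation[OF I A W x eq this]
  have eq_u: "a * ((u + p) * (u + v)) = fps_const l * (u * u - 1)"
    unfolding u_def v_def p_def a_def by simp
  have "{- 3 * sg / 2, sg / 2} = {- sg / 2 - (-1), - sg / 2 + (-1)}" using sg by auto
  from series_fps_fshift_functional_equation[OF I A W x eq this]
  have eq_v: "b * ((v + q) * (v + u)) = fps_const l * (v * v - 1)"
    unfolding u_def v_def q_def b_def by simp
  have "(u + v) $ 0 = 2 * W 0 x"
    by (simp add: u_def v_def fshift_def)
  then have "(u + v) $ 0 \<noteq> 0" using W0 by simp
  then have "u + v \<noteq> 0" by (metis fps_zero_nth)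
  with eq_u eq_v have E_reflected: "fps_const l * u - a * (u + p) = fps_const l * v - b * (v + q)"
    by (intro cancel_common_factor_of_equations) (simp_all add: add.commute)
  have "series_fps (fshift (-1) 0 (fshift 1 (sg / 2) W)) x = v"
    using series_fps_fshift_fshift[OF I W x, where s = "-1" and c = 0 and s' = 1 and c' = "sg / 2"] by (simp add: v_def)
  moreover have "series_fps (fshift (-1) 0 (fshift 1 (sg / 2) A)) x = b"
    using series_fps_fshift_fshift[OF I A x, where s = "-1" and c = 0 and s' = 1 and c' = "sg / 2"] by (simp add: b_def)
  moreover have "series_fps (fshift (-1) 0 (fshift (-1) (3 * sg / 2) W)) x = q"
    using series_fps_fshift_fshift[OF I W x, where s = "-1" and c = 0 and s' = "-1" and c' = "3 * sg / 2"] by (simp add: q_def)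
  ultimately have "series_fps (fshift (-1) 0 (E_series l sg A W)) x = fps_const l * v - b * (v + q)"
    unfolding E_series_def
    by (simp add: series_fps_fshift_fmul[OF I _ _ x] series_fps_fshift_fscale[OF I _ x]
        series_fps_fshift_fsub[OF I _ _ x] series_fps_fshift_fadd[OF I _ _ x]
        smooth_series_fmul[OF I] smooth_series_fadd[OF I] smooth_series_fscale[OF I]
        smooth_series_fshift[OF I] A W)
  moreover have "series_fps (E_series l sg A W) x = fps_const l * u - a * (u + p)"
    unfolding E_series_def u_def a_def p_def
    by (simp add: series_fps_fsub series_fps_fscale series_fps_fmul series_fps_fadd)
  ultimately show ?thesis
    using E_reflected series_fps_fshift_reflect[of "E_series l sg A W" x] by simp
qed

lemma w_c_nonzero:
  assumes "r \<ge> 0" "4 * r < norm l"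
  shows "w_c r l \<noteq> 0"
proof -
  have "l \<noteq> 0" using assms by auto
  moreover have "1 - 4 * complex_of_real r / l \<noteq> 0"
  proof
    assume "1 - 4 * complex_of_real r / l = 0"
    then have "l = 4 * complex_of_real r" using \<open>l \<noteq> 0\<close> by (simp add: field_simps)
    then show False using assms by (simp add: norm_mult)
  qed
  ultimately show ?thesis by (simp add: w_c_def)
qed

theorem proposition1:
  fixes r_c :: real and I :: "real set"
    and a :: "nat \<Rightarrow> real \<Rightarrow> real"
    and V :: "nat \<Rightarrow> complex \<Rightarrow> real \<Rightarrow> complex"
  assumes rc_pos: "r_c > 0"
    and I_open: "open I" and I_interval: "is_interval I" and I_ne: "I \<noteq> {}"
    and a0: "\<forall>x\<in>I. a 0 x = r_c"
    and a_smooth: "\<forall>k\<ge>1. smooth_on I (a k)"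
    and V_anal: "\<forall>k. \<forall>x\<in>I. (\<lambda>l. V k l x) holomorphic_on {l. norm l > 4 * r_c}"
    and V_smooth: "\<forall>k. \<forall>l. norm l > 4 * r_c \<longrightarrow> smooth_on I (V k l)"
    and V0: "\<forall>l x. norm l > 4 * r_c \<longrightarrow> x \<in> I \<longrightarrow> V 0 l x = l / w_c r_c l"
    and eqn: "\<forall>l. norm l > 4 * r_c \<longrightarrow> (\<forall>m. \<forall>x\<in>I.
       (let A = (\<lambda>k y. complex_of_real (a k y)); W = (\<lambda>k. V k l) in
        fmul A (fmul (fadd W (fshift (-1) (-1) W)) (fadd W (fshift (-1) 1 W))) m x
        = fscale l (fsub (fmul W W) fone) m x))"
  shows "\<forall>l. norm l > 4 * r_c \<longrightarrow> (\<forall>sg\<in>{-1, 1::real}. \<forall>m. \<forall>x\<in>I. odd m \<longrightarrow>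
       (let A = (\<lambda>k y. complex_of_real (a k y)); W = (\<lambda>k. V k l) in
        fsub (fscale l (fshift 1 (sg / 2) W))
             (fmul (fshift 1 (sg / 2) A) (fadd (fshift 1 (sg / 2) W) (fshift (-1) (3 * sg / 2) W))) m x
        = 0))"
proof (intro allI impI ballI)
  fix l :: complex and sg :: real and m :: nat and x :: real
  assume l: "norm l > 4 * r_c" and sg: "sg \<in> {-1, 1}" and x: "x \<in> I" and "odd m"
  define A where "A = (\<lambda>k y. complex_of_real (a k y))"
  define W where "W = (\<lambda>k. V k l)"
  have "smooth_on I (A k)" for k
  proof (cases "k = 0")
    case True
    show ?thesis
      by (rule smooth_on_cong[OF I_open smooth_on_const(1)[OF I_open, of "of_real r_c"]])
         (use a0 True in \<open>simp add: A_def\<close>)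
  qed (use I_open a_smooth smooth_on_of_real in \<open>simp add: A_def\<close>)
  then have "smooth_series I A" by (simp add: smooth_series_def)
  moreover have "smooth_series I W" using V_smooth l by (simp add: smooth_series_def W_def)
  moreover have "W 0 x \<noteq> 0"
    using V0 l x w_c_nonzero[of r_c l] rc_pos by (auto simp: W_def)
  moreover have "\<And>k y. y \<in> I \<Longrightarrow>
      fmul A (fmul (fadd W (fshift (-1) (-1) W)) (fadd W (fshift (-1) 1 W))) k y =
      fscale l (fsub (fmul W W) fone) k y"
    using eqn l unfolding A_def W_def Let_def by blast
  ultimately have "fps_scale (-1) (series_fps (E_series l sg A W) x) = series_fps (E_series l sg A W) x"
    using E_series_even[OF I_open _ _ x _ _ sg] by blast
  from fps_scale_minus_one_invariant_odd_nth[OF this \<open>odd m\<close>]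
  show "let A = (\<lambda>k y. complex_of_real (a k y)); W = (\<lambda>k. V k l) in
        fsub (fscale l (fshift 1 (sg / 2) W))
             (fmul (fshift 1 (sg / 2) A) (fadd (fshift 1 (sg / 2) W) (fshift (-1) (3 * sg / 2) W))) m x
        = 0"
    by (simp add: E_series_def A_def W_def)
qed

end
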